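(* Let $\varepsilon\in(0,\varepsilon_0]$. Then for every $\alpha$ with $0<\alpha\le\varepsilon(1-\omega\varepsilon)$, one has $\mathbb D_\varepsilon\subset\mathbb D_\alpha$.
   Context: Let $\mathfrak I=(a,b)\subset\mathbb R$ be a bounded interval, $\mathcal H=L^2(\mathfrak I)$ with inner product $\langle\cdot,\cdot\rangle$ and norm $\|\cdot\|$. Let $A=-\partial_{xx}$ with domain $H^2(\mathfrak I)\cap H^1_0(\mathfrak I)$, $\lambda_1>0$ its first eigenvalue, $\mathcal H^r=D(A^{r/2})$, $\|u\|_r=\|A^{r/2}u\|$, $B=I+A$, and on $\mathcal H^r$ the inner product $(u,v)_r=\langle A^{(r-1)/2}B^{1/2}u,A^{(r-1)/2}B^{1/2}v\rangle$ with norm $|||u|||_r^2=\|u\|_{r-1}^2+\|u\|_r^2$. Set $\omega=\sqrt{(1+\lambda_1)/\lambda_1}$. Let $\mu:(0,\infty)\to[0,\infty)$, $\mu\not\equiv0$, nonincreasing, absolutely continuous, with $\kappa:=\int_0^\infty\mu(s)\,ds\in(0,\infty)$, $\int_0^\infty s\mu(s)\,ds=1$, $\lim_{s\to0^+}\mu(s)<\infty$, and $\mu'+\delta\mu\le0$ a.e. for some $\delta>0$. $\mathcal M=L^2_\mu(\mathbb R^+;\mathcal H^1)$ with norm $\|\eta\|_{\mathcal M}^2=\int_0^\infty\mu(s)\|\eta(s)\|_1^2ds$; $\mathbf H=\mathcal H^1\times\mathcal M$ with $\|(u,\eta)\|_{\mathbf H}^2=|||u|||_1^2+\|\eta\|_{\mathcal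 M}^2$. $T\eta=-\partial_s\eta$ with domain $\{\eta\in\mathcal M:\partial_s\eta\in\mathcal M,\ \lim_{s\to0}\|\eta(s)\|_1=0\}$. For $f\in L^2(\mathfrak I)$, $S(t)$ is the strongly continuous semigroup on $\mathbf H$ generated by $Bu_t+u_x+\int_0^\infty\mu(s)A\eta(s)\,ds+uu_x=f$, $\eta_t=T\eta+u$ (Dirichlet conditions on $u$), $S(t)z=(u(t),\eta^t)$. Let $F(x)=\int_a^xf(y)\,dy$ and for $\varepsilon>0$, $z=(u,\eta)\in\mathbf H$, $$\Lambda_\varepsilon(z)=\|z\|_{\mathbf H}^2+\frac2\kappa\int_0^\infty\mu(s)\langle F,\eta_x(s)\rangle\,ds+\frac2\kappa\|F\|^2-\frac{\varepsilon}{\sqrt\kappa}\int_0^\infty\mu(s)(u,\eta(s))_1\,ds.$$ Let $c_1,c_2,c_3>0$ and $\varepsilon_0\in(0,\frac1{2\omega})$ be constants depending only on $\mathfrak I,\mu$ such that for every $z\in\mathbf H$ and $\varepsilon\in(0,\varepsilon_0]$, $\mathcal L_\varepsilon(t)=\Lambda_\varepsilon(S(t)z)$ satisfies $\mathcal L_\varepsilon'+\varepsilon c_1\mathcal L_\varepsilon\le c_2\|F\|^2+c_3\varepsilon^2\mathcal L_\varepsilon^2$ for all $t\ge0$. Standing assumption: $\|F\|<\frac{c_1}{2\sqrt{c_2c_3}}$. Set $c_*=\sqrt{c_2/c_3}\,\big(\frac{c_1}{\sqrt{c_2c_3}}-\|F\|\big)>0$ and, for $\varepsilon>0$, $\mathbb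 D_\varepsilon=\{z\in\mathbf H:\Lambda_\varepsilon(z)\le c_*/\varepsilon\}$. *)

theory Defs
  imports "HOL-Analysis.Analysis"
begin

definition abs_cont_on :: "real set \<Rightarrow> (real \<Rightarrow> real) \<Rightarrow> bool" where
  "abs_cont_on S g \<longleftrightarrow>
     (\<forall>e>0. \<exists>d>0. \<forall>(n::nat) (x::nat \<Rightarrow> real) (y::nat \<Rightarrow> real).
        (\<forall>i<n. x i \<in> S \<and> y i \<in> S \<and> x i < y i) \<and>
        (\<forall>i<n. \<forall>j<n. i \<noteq> j \<longrightarrow> {x i<..<y i} \<inter> {x j<..<y j} = {}) \<and>
        (\<Sum>i<n. y i - x i) < d
        \<longrightarrow> (\<Sum>i<n. \<bar>g (y i) - g (x i)\<bar>) < e)"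

definition L2fun :: "real \<Rightarrow> real \<Rightarrow> (real \<Rightarrow> real) \<Rightarrow> bool" where
  "L2fun a b g \<longleftrightarrow> set_borel_measurable lborel {a..b} g \<and>
                    set_integrable lborel {a..b} (\<lambda>x. (g x)\<^sup>2)"

definition L2ip :: "real \<Rightarrow> real \<Rightarrow> (real \<Rightarrow> real) \<Rightarrow> (real \<Rightarrow> real) \<Rightarrow> real" where
  "L2ip a b g h = (LINT x:{a..b}|lborel. g x * h x)"

definition L2norm :: "real \<Rightarrow> real \<Rightarrow> (real \<Rightarrow> real) \<Rightarrow> real" where
  "L2norm a b g = sqrt (L2ip a b g g)"

definition is_wderiv :: "real \<Rightarrow> real \<Rightarrow> (real \<Rightarrow> real) \<Rightarrow> (real \<Rightarrow> real) \<Rightarrow> bool" where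
  "is_wderiv a b u g \<longleftrightarrow> L2fun a b g \<and> (\<forall>x\<in>{a..b}. u x = (LBINT y=a..x. g y))"

definition H10 :: "real \<Rightarrow> real \<Rightarrow> (real \<Rightarrow> real) set" where
  "H10 a b = {u. (\<exists>g. is_wderiv a b u g) \<and> u b = 0}"

definition wderiv :: "real \<Rightarrow> real \<Rightarrow> (real \<Rightarrow> real) \<Rightarrow> (real \<Rightarrow> real)" where
  "wderiv a b u = (SOME g. is_wderiv a b u g)"

text \<open>\<open>\<parallel>u\<parallel>_1 = \<parallel>A^(1/2) u\<parallel> = \<parallel>u_x\<parallel>\<close>\<close>
definition norm1 :: "real \<Rightarrow> real \<Rightarrow> (real \<Rightarrow> real) \<Rightarrow> real" where
  "norm1 a b u = L2norm a b (wderiv a b u)"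

text \<open>\<open>(u,v)_1 = <B^(1/2) u, B^(1/2) v> = <u,v> + <u_x,v_x>\<close>\<close>
definition ip1 :: "real \<Rightarrow> real \<Rightarrow> (real \<Rightarrow> real) \<Rightarrow> (real \<Rightarrow> real) \<Rightarrow> real" where
  "ip1 a b u v = L2ip a b u v + L2ip a b (wderiv a b u) (wderiv a b v)"

definition tnorm1 :: "real \<Rightarrow> real \<Rightarrow> (real \<Rightarrow> real) \<Rightarrow> real" where
  "tnorm1 a b u = sqrt ((L2norm a b u)\<^sup>2 + (norm1 a b u)\<^sup>2)"

text \<open>First Dirichlet eigenvalue of \<open>-\<partial>_xx\<close> on (a,b).\<close>
definition lambda1 :: "real \<Rightarrow> real \<Rightarrow> real" where
  "lambda1 a b = (pi / (b - a))\<^sup>2"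

definition omega :: "real \<Rightarrow> real \<Rightarrow> real" where
  "omega a b = sqrt ((1 + lambda1 a b) / lambda1 a b)"

definition kernel_ok :: "(real \<Rightarrow> real) \<Rightarrow> bool" where
  "kernel_ok \<mu> \<longleftrightarrow>
     (\<forall>s>0. \<mu> s \<ge> 0) \<and> (\<exists>s>0. \<mu> s \<noteq> 0) \<and>
     (\<forall>s t. 0 < s \<longrightarrow> s \<le> t \<longrightarrow> \<mu> t \<le> \<mu> s) \<and>
     abs_cont_on {0<..} \<mu> \<and>
     set_integrable lborel {0<..} \<mu> \<and> (LINT s:{0<..}|lborel. \<mu> s) > 0 \<and>
     set_integrable lborel {0<..} (\<lambda>s. s * \<mu> s) \<and>
     (LINT s:{0<..}|lborel. s * \<mu> s) = 1 \<and>
     (\<exists>L. (\<mu> \<longlongrightarrow> L) (at_right 0)) \<and>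
     (\<exists>\<delta>>0. AE s in lborel. s > 0 \<longrightarrow>
          (\<exists>d. (\<mu> has_real_derivative d) (at s) \<and> d + \<delta> * \<mu> s \<le> 0))"

definition kappa :: "(real \<Rightarrow> real) \<Rightarrow> real" where
  "kappa \<mu> = (LINT s:{0<..}|lborel. \<mu> s)"

text \<open>\<open>\<M> = L^2_\<mu>(\<real>^+; \<H>^1)\<close>: weakly (= strongly, \<H>^1 separable) measurable,
  \<H>^1-valued, square integrable with weight \<mu>.\<close>
definition MM :: "real \<Rightarrow> real \<Rightarrow> (real \<Rightarrow> real) \<Rightarrow> (real \<Rightarrow> real \<Rightarrow> real) set" where
  "MM a b \<mu> = {\<eta>. (\<forall>s>0. \<eta> s \<in> H10 a b) \<and>
       (\<forall>v\<in>H10 a b. set_borel_measurable lborel {0<..} (\<lambda>s. ip1 a b v (\<eta> s))) \<and>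
       set_integrable lborel {0<..} (\<lambda>s. \<mu> s * (norm1 a b (\<eta> s))\<^sup>2)}"

definition Mnorm :: "real \<Rightarrow> real \<Rightarrow> (real \<Rightarrow> real) \<Rightarrow> (real \<Rightarrow> real \<Rightarrow> real) \<Rightarrow> real" where
  "Mnorm a b \<mu> \<eta> = sqrt (LINT s:{0<..}|lborel. \<mu> s * (norm1 a b (\<eta> s))\<^sup>2)"

type_synonym state = "(real \<Rightarrow> real) \<times> (real \<Rightarrow> real \<Rightarrow> real)"

definition HH :: "real \<Rightarrow> real \<Rightarrow> (real \<Rightarrow> real) \<Rightarrow> state set" where
  "HH a b \<mu> = {(u, \<eta>). u \<in> H10 a b \<and> \<eta> \<in> MM a b \<mu>}"

definition Hnorm :: "real \<Rightarrow> real \<Rightarrow> (real \<Rightarrow> real) \<Rightarrow> state \<Rightarrow> real" where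
  "Hnorm a b \<mu> z = sqrt ((tnorm1 a b (fst z))\<^sup>2 + (Mnorm a b \<mu> (snd z))\<^sup>2)"

definition primF :: "real \<Rightarrow> (real \<Rightarrow> real) \<Rightarrow> (real \<Rightarrow> real)" where
  "primF a f = (\<lambda>x. LBINT y=a..x. f y)"

definition Lambda :: "real \<Rightarrow> real \<Rightarrow> (real \<Rightarrow> real) \<Rightarrow> (real \<Rightarrow> real) \<Rightarrow> real \<Rightarrow> state \<Rightarrow> real" where
  "Lambda a b \<mu> f \<epsilon> z =
     (let F = primF a f; u = fst z; \<eta> = snd z; k = kappa \<mu> in
       (Hnorm a b \<mu> z)\<^sup>2
       + 2 / k * (LINT s:{0<..}|lborel. \<mu> s * L2ip a b F (wderiv a b (\<eta> s)))
       + 2 / k * (L2norm a b F)\<^sup>2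
       - \<epsilon> / sqrt k * (LINT s:{0<..}|lborel. \<mu> s * ip1 a b u (\<eta> s)))"

definition cstar :: "real \<Rightarrow> real \<Rightarrow> (real \<Rightarrow> real) \<Rightarrow> real \<Rightarrow> real \<Rightarrow> real \<Rightarrow> real" where
  "cstar a b f c1 c2 c3 =
     sqrt (c2 / c3) * (c1 / sqrt (c2 * c3) - L2norm a b (primF a f))"

definition DD :: "real \<Rightarrow> real \<Rightarrow> (real \<Rightarrow> real) \<Rightarrow> (real \<Rightarrow> real) \<Rightarrow> real \<Rightarrow> real \<Rightarrow> real \<Rightarrow> real \<Rightarrow> state set" where
  "DD a b \<mu> f c1 c2 c3 \<epsilon> = {z \<in> HH a b \<mu>. Lambda a b \<mu> f \<epsilon> z \<le> cstar a b f c1 c2 c3 / \<epsilon>}"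

end

theory Submission
  imports Defs
begin

text \<open>\<open>\<Lambda>\<^sub>\<epsilon>(z) = \<Lambda>\<^sub>0(z) - \<epsilon> J(z)\<close> is affine in \<open>\<epsilon>\<close>, with \<open>J(z) = \<kappa>\<^sup>-\<^sup>1\<^sup>/\<^sup>2 \<integral>\<mu>(s) (u, \<eta>(s))\<^sub>1 ds\<close>.
  Cauchy--Schwarz and a Poincar\'e inequality give \<open>J \<le> \<omega> \<Lambda>\<^sub>0\<close>. If \<open>J \<le> 0\<close>, then
  \<open>\<Lambda>\<^sub>\<alpha> \<le> \<Lambda>\<^sub>\<epsilon> \<le> c\<^sub>*/\<epsilon> \<le> c\<^sub>*/\<alpha>\<close> since \<open>\<alpha> \<le> \<epsilon>\<close>; otherwise \<open>\<Lambda>\<^sub>0 > 0\<close> and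
  \<open>\<alpha> \<Lambda>\<^sub>\<alpha> \<le> \<alpha> \<Lambda>\<^sub>0 \<le> \<epsilon> (1 - \<omega> \<epsilon>) \<Lambda>\<^sub>0 \<le> \<epsilon> \<Lambda>\<^sub>\<epsilon> \<le> c\<^sub>*\<close>.\<close>

lemma integrable_mult_of_square_integrable:
  fixes f g :: "'a \<Rightarrow> real"
  assumes "f \<in> borel_measurable M" "g \<in> borel_measurable M"
    and "integrable M (\<lambda>x. (f x)\<^sup>2)" "integrable M (\<lambda>x. (g x)\<^sup>2)"
  shows "integrable M (\<lambda>x. f x * g x)"
proof (rule Bochner_Integration.integrable_bound[OF Bochner_Integration.integrable_add[OF assms(3,4)]])
  show "(\<lambda>x. f x * g x) \<in> borel_measurable M" using assms(1,2) by measurable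
  have "2 * \<bar>f x * g x\<bar> \<le> (f x)\<^sup>2 + (g x)\<^sup>2" for x
    using sum_squares_bound[of "\<bar>f x\<bar>" "\<bar>g x\<bar>"] by (simp only: abs_mult power2_abs)
  then show "AE x in M. norm (f x * g x) \<le> norm ((f x)\<^sup>2 + (g x)\<^sup>2)"
    by (intro AE_I2) (smt (verit) abs_ge_zero real_norm_def zero_le_power2)
qed

text \<open>The quadratic \<open>t \<mapsto> \<integral>(f - t g)\<^sup>2\<close> is nonnegative, so its discriminant is not positive.\<close>
lemma Cauchy_Schwarz_integral:
  fixes f g :: "'a \<Rightarrow> real"
  assumes "f \<in> borel_measurable M" "g \<in> borel_measurable M"
    and fi: "integrable M (\<lambda>x. (f x)\<^sup>2)" and gi: "integrable M (\<lambda>x. (g x)\<^sup>2)"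
  shows "(\<integral>x. f x * g x \<partial>M)\<^sup>2 \<le> (\<integral>x. (f x)\<^sup>2 \<partial>M) * (\<integral>x. (g x)\<^sup>2 \<partial>M)"
proof -
  have fgi: "integrable M (\<lambda>x. f x * g x)"
    by (rule integrable_mult_of_square_integrable[OF assms])
  define A where "A = (\<integral>x. (f x)\<^sup>2 \<partial>M)"
  define B where "B = (\<integral>x. f x * g x \<partial>M)"
  define C where "C = (\<integral>x. (g x)\<^sup>2 \<partial>M)"
  have quad: "0 \<le> A - 2 * t * B + t\<^sup>2 * C" for t
  proof -
    have "0 \<le> (\<integral>x. (f x - t * g x)\<^sup>2 \<partial>M)" by (rule integral_nonneg_AE) simp
    also have "\<dots> = (\<integral>x. (f x)\<^sup>2 - 2 * t * (f x * g x) + t\<^sup>2 * (g x)\<^sup>2 \<partial>M)"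
      by (intro Bochner_Integration.integral_cong refl) (simp add: power2_eq_square algebra_simps)
    also have "\<dots> = A - 2 * t * B + t\<^sup>2 * C"
      using fi gi fgi unfolding A_def B_def C_def by simp
    finally show ?thesis .
  qed
  have "0 \<le> C" unfolding C_def by (simp add: integral_nonneg_AE)
  show "B\<^sup>2 \<le> A * C"
  proof (cases "C = 0")
    case True
    then have "B = 0" using quad[of "(A + 1) / B"] quad[of 0] by (cases "B = 0") auto
    then show ?thesis using quad[of 0] True by simp
  next
    case False
    with \<open>0 \<le> C\<close> have "0 < C" by simp
    have "0 \<le> A - 2 * (B / C) * B + (B / C)\<^sup>2 * C" by (rule quad)
    also have "\<dots> = (A * C - B\<^sup>2) / C" using \<open>0 < C\<close> by (simp add: field_simps power2_eq_square)
    finally show ?thesis using \<open>0 < C\<close> by (simp add: zero_le_divide_iff)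
  qed
qed

lemma
  fixes f g :: "'a \<Rightarrow> real"
  assumes "set_borel_measurable M S f" "set_borel_measurable M S g"
    and "set_integrable M S (\<lambda>x. (f x)\<^sup>2)" "set_integrable M S (\<lambda>x. (g x)\<^sup>2)"
  shows set_integrable_mult_of_square_integrable: "set_integrable M S (\<lambda>x. f x * g x)"
    and Cauchy_Schwarz_set_integral:
      "(LINT x:S|M. f x * g x)\<^sup>2 \<le> (LINT x:S|M. (f x)\<^sup>2) * (LINT x:S|M. (g x)\<^sup>2)"
proof -
  have sq: "(indicator S x *\<^sub>R h x)\<^sup>2 = indicator S x *\<^sub>R (h x)\<^sup>2" for h :: "'a \<Rightarrow> real" and x
    by (simp add: indicator_def power2_eq_square)
  have pr: "(indicator S x *\<^sub>R f x) * (indicator S x *\<^sub>R g x) = indicator S x *\<^sub>R (f x * g x)" for x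
    by (simp add: indicator_def)
  note hyps = assms[unfolded set_borel_measurable_def set_integrable_def sq[symmetric]]
  show "set_integrable M S (\<lambda>x. f x * g x)"
    using integrable_mult_of_square_integrable[OF hyps] unfolding set_integrable_def pr .
  show "(LINT x:S|M. f x * g x)\<^sup>2 \<le> (LINT x:S|M. (f x)\<^sup>2) * (LINT x:S|M. (g x)\<^sup>2)"
    using Cauchy_Schwarz_integral[OF hyps] unfolding set_lebesgue_integral_def sq pr .
qed

lemma abs_set_integral_le:
  fixes f g :: "'a \<Rightarrow> real"
  assumes g: "set_integrable M S g" and fg: "\<And>x. x \<in> S \<Longrightarrow> \<bar>f x\<bar> \<le> g x"
  shows "\<bar>LINT x:S|M. f x\<bar> \<le> (LINT x:S|M. g x)"
proof (cases "set_integrable M S f")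
  case True
  have "\<bar>LINT x:S|M. f x\<bar> \<le> (LINT x:S|M. \<bar>f x\<bar>)"
    using set_integral_norm_bound[OF True] by simp
  also have "\<dots> \<le> (LINT x:S|M. g x)"
    by (rule set_integral_mono[OF set_integrable_abs[OF True] g fg])
  finally show ?thesis .
next
  case False
  then have "(LINT x:S|M. f x) = 0"
    unfolding set_integrable_def set_lebesgue_integral_def by (rule not_integrable_integral_eq)
  moreover have "0 \<le> (LINT x:S|M. g x)"
    unfolding set_lebesgue_integral_def
    by (rule integral_nonneg_AE) (use fg in \<open>auto simp: indicator_def intro!: AE_I2 order_trans[OF abs_ge_zero]\<close>)
  ultimately show ?thesis by simp
qed

text \<open>Cauchy--Schwarz for \<open>\<surd>w\<close> and \<open>\<surd>w h\<close>.\<close>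
lemma
  fixes w h :: "real \<Rightarrow> real"
  assumes S: "S \<in> sets lborel" and w: "set_integrable lborel S w" and w_nonneg: "\<And>s. s \<in> S \<Longrightarrow> 0 \<le> w s"
    and h_nonneg: "\<And>s. s \<in> S \<Longrightarrow> 0 \<le> h s" and wh: "set_integrable lborel S (\<lambda>s. w s * (h s)\<^sup>2)"
  shows set_integrable_weighted: "set_integrable lborel S (\<lambda>s. w s * h s)"
    and set_integral_weighted_sq_le:
      "(LINT s:S|lborel. w s * h s)\<^sup>2 \<le> (LINT s:S|lborel. w s) * (LINT s:S|lborel. w s * (h s)\<^sup>2)"
proof -
  have sqrt_meas: "set_borel_measurable lborel S (\<lambda>s. sqrt (k s))"
    if "set_integrable lborel S k" for k :: "real \<Rightarrow> real"
  proof -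
    have [measurable]: "(\<lambda>s. indicator S s *\<^sub>R k s) \<in> borel_measurable borel"
      using borel_measurable_integrable[OF that[unfolded set_integrable_def]] by simp
    have "(\<lambda>s. sqrt (indicator S s *\<^sub>R k s)) \<in> borel_measurable borel" by measurable
    moreover have "(\<lambda>s. sqrt (indicator S s *\<^sub>R k s)) = (\<lambda>s. indicator S s *\<^sub>R sqrt (k s))"
      by (auto simp: indicator_def fun_eq_iff)
    ultimately show ?thesis unfolding set_borel_measurable_def by simp
  qed
  have f2: "(sqrt (w s))\<^sup>2 = w s" and g2: "(sqrt (w s * (h s)\<^sup>2))\<^sup>2 = w s * (h s)\<^sup>2"
    and fg: "sqrt (w s) * sqrt (w s * (h s)\<^sup>2) = w s * h s" if "s \<in> S" for s
  proof -
    show "(sqrt (w s))\<^sup>2 = w s" "(sqrt (w s * (h s)\<^sup>2))\<^sup>2 = w s * (h s)\<^sup>2"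
      using w_nonneg[OF that] by simp_all
    have "sqrt (w s) * sqrt (w s * (h s)\<^sup>2) = sqrt ((w s * h s)\<^sup>2)"
      by (simp add: real_sqrt_mult[symmetric] power2_eq_square algebra_simps)
    then show "sqrt (w s) * sqrt (w s * (h s)\<^sup>2) = w s * h s"
      using w_nonneg[OF that] h_nonneg[OF that] by simp
  qed
  have fi: "set_integrable lborel S (\<lambda>s. (sqrt (w s))\<^sup>2)"
    using w by (subst set_integrable_cong[OF refl refl f2]) auto
  have gi: "set_integrable lborel S (\<lambda>s. (sqrt (w s * (h s)\<^sup>2))\<^sup>2)"
    using wh by (subst set_integrable_cong[OF refl refl g2]) auto
  note hyps = sqrt_meas[OF w] sqrt_meas[OF wh] fi gi
  show "set_integrable lborel S (\<lambda>s. w s * h s)"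
    using set_integrable_mult_of_square_integrable[OF hyps]
    by (subst (asm) set_integrable_cong[OF refl refl fg]) auto
  have "(LINT s:S|lborel. sqrt (w s) * sqrt (w s * (h s)\<^sup>2)) = (LINT s:S|lborel. w s * h s)"
    "(LINT s:S|lborel. (sqrt (w s))\<^sup>2) = (LINT s:S|lborel. w s)"
    "(LINT s:S|lborel. (sqrt (w s * (h s)\<^sup>2))\<^sup>2) = (LINT s:S|lborel. w s * (h s)\<^sup>2)"
    using S fg f2 g2 by (auto intro!: set_lebesgue_integral_cong)
  then show "(LINT s:S|lborel. w s * h s)\<^sup>2 \<le> (LINT s:S|lborel. w s) * (LINT s:S|lborel. w s * (h s)\<^sup>2)"
    using Cauchy_Schwarz_set_integral[OF hyps] by simp
qed

lemma L2norm_nonneg: "0 \<le> L2norm a b g"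
  and L2norm_sq: "(L2norm a b g)\<^sup>2 = L2ip a b g g"
proof -
  have "0 \<le> L2ip a b g g"
    unfolding L2ip_def set_lebesgue_integral_def
    by (rule integral_nonneg_AE) (simp add: indicator_def)
  then show "0 \<le> L2norm a b g" "(L2norm a b g)\<^sup>2 = L2ip a b g g"
    unfolding L2norm_def by simp_all
qed

lemma abs_L2ip_le:
  assumes "L2fun a b g" "L2fun a b h"
  shows "\<bar>L2ip a b g h\<bar> \<le> L2norm a b g * L2norm a b h"
proof -
  have "(L2ip a b g h)\<^sup>2 \<le> L2ip a b g g * L2ip a b h h"
    using Cauchy_Schwarz_set_integral[of lborel "{a..b}" g h] assms
    unfolding L2fun_def L2ip_def by (simp add: power2_eq_square)
  then have "sqrt ((L2ip a b g h)\<^sup>2) \<le> sqrt (L2ip a b g g * L2ip a b h h)"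
    by (rule real_sqrt_le_mono)
  then show ?thesis unfolding L2norm_def by (simp add: real_sqrt_mult)
qed

lemma L2fun_subinterval:
  assumes g: "L2fun a b g" and "a \<le> c" "d \<le> b"
  shows "L2fun c d g"
proof -
  have "(\<lambda>x. indicator {c..d} x *\<^sub>R (indicator {a..b} x *\<^sub>R g x)) \<in> borel_measurable lborel"
    by (rule borel_measurable_scaleR[OF borel_measurable_indicator])
      (use g in \<open>auto simp: L2fun_def set_borel_measurable_def\<close>)
  moreover have "(\<lambda>x. indicator {c..d} x *\<^sub>R (indicator {a..b} x *\<^sub>R g x)) = (\<lambda>x. indicator {c..d} x *\<^sub>R g x)"
    using assms(2,3) by (auto simp: indicator_def fun_eq_iff)
  moreover have "set_integrable lborel {c..d} (\<lambda>x. (g x)\<^sup>2)"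
    by (rule set_integrable_subset[of _ "{a..b}"]) (use assms in \<open>auto simp: L2fun_def\<close>)
  ultimately show ?thesis unfolding L2fun_def set_borel_measurable_def by simp
qed

lemma L2fun_set_integrable:
  assumes g: "L2fun a b g"
  shows "set_integrable lborel {a..b} g"
proof (rule set_integrable_bound[where f = "\<lambda>x. 1 + (g x)\<^sup>2"])
  show "set_integrable lborel {a..b} (\<lambda>x. 1 + (g x)\<^sup>2)"
    using g borel_integrable_atLeastAtMost'[of a b "\<lambda>_. 1::real"] unfolding L2fun_def
    by (intro set_integral_add(1)) auto
  show "set_borel_measurable lborel {a..b} g" using g by (simp add: L2fun_def)
  have "\<bar>g x\<bar> \<le> 1 + (g x)\<^sup>2" for x
    using sum_squares_bound[of 1 "\<bar>g x\<bar>"] by simp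
  then show "AE x in lborel. x \<in> {a..b} \<longrightarrow> norm (g x) \<le> norm (1 + (g x)\<^sup>2)"
    by (intro AE_I2) simp
qed

lemma L2fun_integral:
  assumes g: "L2fun a b g"
  shows "g integrable_on {a..b}" "(LINT x:{a..b}|lborel. g x) = integral {a..b} g"
    and "(\<lambda>x. (g x)\<^sup>2) integrable_on {a..b}"
      "(LINT x:{a..b}|lborel. (g x)\<^sup>2) = integral {a..b} (\<lambda>x. (g x)\<^sup>2)"
  using set_borel_integral_eq_integral[OF L2fun_set_integrable[OF g]]
    set_borel_integral_eq_integral[of "{a..b}" "\<lambda>x. (g x)\<^sup>2"] g
  by (auto simp: L2fun_def)

lemma integral_sq_le_length_mult:
  assumes "L2fun c d g"
  shows "(integral {c..d} g)\<^sup>2 \<le> (d - c) * integral {c..d} (\<lambda>x. (g x)\<^sup>2)"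
proof (cases "c \<le> d")
  case True
  have one: "set_integrable lborel {c..d} (\<lambda>_. (1::real)\<^sup>2)"
    by (rule borel_integrable_atLeastAtMost') simp
  have "(LINT x:{c..d}|lborel. 1 * g x)\<^sup>2
      \<le> (LINT x:{c..d}|lborel. (1::real)\<^sup>2) * (LINT x:{c..d}|lborel. (g x)\<^sup>2)"
    using assms one unfolding L2fun_def set_borel_measurable_def
    by (intro Cauchy_Schwarz_set_integral) (auto simp: set_borel_measurable_def)
  then show ?thesis
    using True by (simp add: set_integral_const L2fun_integral[OF assms])
qed simp

section \<open>Poincar\'e inequality\<close>

lemma integral_sq_le_length_mult_subinterval:
  assumes g: "L2fun c d g" and "c \<le> x" "x \<le> y" "y \<le> d"
  shows "(integral {x..y} g)\<^sup>2 \<le> (y - x) * integral {c..d} (\<lambda>t. (g t)\<^sup>2)"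
proof -
  have "(integral {x..y} g)\<^sup>2 \<le> (y - x) * integral {x..y} (\<lambda>t. (g t)\<^sup>2)"
    by (rule integral_sq_le_length_mult[OF L2fun_subinterval[OF g]]) (use assms in auto)
  also have "\<dots> \<le> (y - x) * integral {c..d} (\<lambda>t. (g t)\<^sup>2)"
    using assms L2fun_integral(3)[OF g] L2fun_integral(3)[OF L2fun_subinterval[OF g]]
    by (intro mult_left_mono integral_subset_le) auto
  finally show ?thesis .
qed

lemma is_wderiv_eq_integral:
  assumes w: "is_wderiv a b u g" and x: "x \<in> {a..b}"
  shows "u x = integral {a..x} g"
proof -
  have g: "L2fun a x g"
    using w x L2fun_subinterval[of a b g a x] by (simp add: is_wderiv_def)
  have "u x = (LBINT y=a..x. g y)" using w x by (simp add: is_wderiv_def)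
  also have "\<dots> = (LBINT y:{a..x}. g y)" using x by (simp add: interval_integral_Icc)
  also have "\<dots> = integral {a..x} g" by (rule L2fun_integral(2)[OF g])
  finally show ?thesis .
qed

lemma is_wderiv_continuous_on:
  assumes "is_wderiv a b u g"
  shows "continuous_on {a..b} u"
proof -
  have "continuous_on {a..b} (\<lambda>x. integral {a..x} g)"
    using assms by (intro indefinite_integral_continuous_1 L2fun_integral(1)) (auto simp: is_wderiv_def)
  then show ?thesis
    by (rule continuous_on_eq) (use is_wderiv_eq_integral[OF assms] in auto)
qed

lemma continuous_on_imp_L2fun:
  fixes u :: "real \<Rightarrow> real"
  assumes "continuous_on {a..b} u"
  shows "L2fun a b u"
  unfolding L2fun_def set_borel_measurable_def
proof
  show "(\<lambda>x. indicator {a..b} x *\<^sub>R u x) \<in> borel_measurable lborel"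
    using borel_measurable_continuous_on_indicator[OF _ assms] by simp
  show "set_integrable lborel {a..b} (\<lambda>x. (u x)\<^sup>2)"
    by (rule borel_integrable_atLeastAtMost') (intro continuous_intros assms)
qed

lemma integral_mult_dist_left:
  fixes a m G :: real
  assumes "a \<le> m"
  shows "integral {a..m} (\<lambda>x. (x - a) * G) = G * (m - a)\<^sup>2 / 2"
proof -
  have "((\<lambda>x. (x - a) * G) has_integral ((m - a)\<^sup>2 / 2 * G - (a - a)\<^sup>2 / 2 * G)) {a..m}"
    by (rule fundamental_theorem_of_calculus[OF assms])
      (auto intro!: derivative_eq_intros
        simp: has_real_derivative_iff_has_vector_derivative[symmetric] power2_eq_square field_simps)
  then show ?thesis by (auto dest: integral_unique)
qed

lemma integral_mult_dist_right:
  fixes m b G :: real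
  assumes "m \<le> b"
  shows "integral {m..b} (\<lambda>x. (b - x) * G) = G * (b - m)\<^sup>2 / 2"
proof -
  have "((\<lambda>x. (b - x) * G) has_integral (- (b - b)\<^sup>2 / 2 * G - (- (b - m)\<^sup>2 / 2) * G)) {m..b}"
    by (rule fundamental_theorem_of_calculus[OF assms])
      (auto intro!: derivative_eq_intros
        simp: has_real_derivative_iff_has_vector_derivative[symmetric] power2_eq_square field_simps)
  then show ?thesis by (auto dest: integral_unique)
qed

lemma is_wderiv_sq_le_left:
  assumes w: "is_wderiv a b u g" and "a \<le> x" "x \<le> m" "m \<le> b"
  shows "(u x)\<^sup>2 \<le> (x - a) * integral {a..m} (\<lambda>t. (g t)\<^sup>2)"
proof -
  have "L2fun a m g" using w assms by (auto simp: is_wderiv_def intro: L2fun_subinterval)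
  then show ?thesis
    using is_wderiv_eq_integral[OF w, of x] integral_sq_le_length_mult_subinterval[of a m g a x] assms
    by simp
qed

lemma is_wderiv_sq_le_right:
  assumes w: "is_wderiv a b u g" and ub: "u b = 0" and "a \<le> m" "m \<le> x" "x \<le> b"
  shows "(u x)\<^sup>2 \<le> (b - x) * integral {m..b} (\<lambda>t. (g t)\<^sup>2)"
proof -
  have g: "L2fun a b g" using w by (simp add: is_wderiv_def)
  have "integral {a..x} g + integral {x..b} g = integral {a..b} g"
    using assms by (intro Henstock_Kurzweil_Integration.integral_combine L2fun_integral(1)[OF g]) auto
  moreover have "integral {a..b} g = 0" using is_wderiv_eq_integral[OF w, of b] ub assms by simp
  ultimately have "u x = - integral {x..b} g" using is_wderiv_eq_integral[OF w, of x] assms by simp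
  moreover have "L2fun m b g" using g assms by (auto intro: L2fun_subinterval)
  ultimately show ?thesis
    using integral_sq_le_length_mult_subinterval[of m b g x b] assms by simp
qed

text \<open>Integrating the pointwise bounds, from \<open>a\<close> on the left half and from \<open>b\<close> on the right half,
  gives the constant \<open>1/8\<close> instead of the \<open>1/2\<close> of a one-sided estimate.\<close>
lemma poincare_inequality:
  assumes w: "is_wderiv a b u g" and ub: "u b = 0" and ab: "a \<le> b"
  shows "L2ip a b u u \<le> (b - a)\<^sup>2 / 8 * L2ip a b g g"
proof -
  have g: "L2fun a b g" using w by (simp add: is_wderiv_def)
  have cu: "continuous_on {a..b} u" by (rule is_wderiv_continuous_on[OF w])
  define m where "m = (a + b) / 2"
  have am: "a \<le> m" "m \<le> b" using ab by (auto simp: m_def)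
  define Gl where "Gl = integral {a..m} (\<lambda>x. (g x)\<^sup>2)"
  define Gr where "Gr = integral {m..b} (\<lambda>x. (g x)\<^sup>2)"
  have left: "(u x)\<^sup>2 \<le> (x - a) * Gl" if "a \<le> x" "x \<le> m" for x
    using is_wderiv_sq_le_left[OF w that am(2)] by (simp add: Gl_def)
  have right: "(u x)\<^sup>2 \<le> (b - x) * Gr" if "m \<le> x" "x \<le> b" for x
    using is_wderiv_sq_le_right[OF w ub am(1) that] by (simp add: Gr_def)
  have iu: "(\<lambda>x. (u x)\<^sup>2) integrable_on {c..d}" if "a \<le> c" "d \<le> b" for c d
    by (rule integrable_continuous_interval)
      (intro continuous_intros continuous_on_subset[OF cu], use that in auto)
  have "integral {a..m} (\<lambda>x. (u x)\<^sup>2) \<le> integral {a..m} (\<lambda>x. (x - a) * Gl)"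
    by (rule integral_le) (use iu am left in \<open>auto intro!: integrable_continuous_interval continuous_intros\<close>)
  also have "\<dots> = Gl * (m - a)\<^sup>2 / 2" by (rule integral_mult_dist_left[OF am(1)])
  also have "\<dots> = Gl * (b - a)\<^sup>2 / 8" by (simp add: m_def power2_eq_square field_simps)
  finally have L: "integral {a..m} (\<lambda>x. (u x)\<^sup>2) \<le> Gl * (b - a)\<^sup>2 / 8" .
  have "integral {m..b} (\<lambda>x. (u x)\<^sup>2) \<le> integral {m..b} (\<lambda>x. (b - x) * Gr)"
    by (rule integral_le) (use iu am right in \<open>auto intro!: integrable_continuous_interval continuous_intros\<close>)
  also have "\<dots> = Gr * (b - m)\<^sup>2 / 2" by (rule integral_mult_dist_right[OF am(2)])
  also have "\<dots> = Gr * (b - a)\<^sup>2 / 8" by (simp add: m_def power2_eq_square field_simps)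
  finally have R: "integral {m..b} (\<lambda>x. (u x)\<^sup>2) \<le> Gr * (b - a)\<^sup>2 / 8" .
  have L2ip_eq: "L2ip a b h h = integral {a..b} (\<lambda>x. (h x)\<^sup>2)" if "L2fun a b h" for h
    using L2fun_integral(4)[OF that] by (simp add: L2ip_def power2_eq_square)
  have "L2ip a b u u = integral {a..m} (\<lambda>x. (u x)\<^sup>2) + integral {m..b} (\<lambda>x. (u x)\<^sup>2)"
    unfolding L2ip_eq[OF continuous_on_imp_L2fun[OF cu]]
    by (rule Henstock_Kurzweil_Integration.integral_combine[symmetric]) (use am iu in auto)
  also have "\<dots> \<le> (Gl + Gr) * (b - a)\<^sup>2 / 8"
    using L R by (simp add: distrib_right add_divide_distrib)
  also have "Gl + Gr = L2ip a b g g"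
    unfolding L2ip_eq[OF g] Gl_def Gr_def
    by (rule Henstock_Kurzweil_Integration.integral_combine) (use am L2fun_integral(3)[OF g] in auto)
  finally show ?thesis by (simp add: mult.commute)
qed

lemma H10_is_wderiv: "u \<in> H10 a b \<Longrightarrow> is_wderiv a b u (wderiv a b u)"
  unfolding H10_def wderiv_def by (metis (mono_tags) mem_Collect_eq someI)

lemma H10_L2fun: "u \<in> H10 a b \<Longrightarrow> L2fun a b u"
  by (rule continuous_on_imp_L2fun[OF is_wderiv_continuous_on[OF H10_is_wderiv]])

lemma H10_wderiv_L2fun: "u \<in> H10 a b \<Longrightarrow> L2fun a b (wderiv a b u)"
  using H10_is_wderiv unfolding is_wderiv_def by blast

lemma norm1_nonneg: "0 \<le> norm1 a b u"
  unfolding norm1_def by (rule L2norm_nonneg)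

lemma tnorm1_le_norm1:
  assumes "v \<in> H10 a b" "a \<le> b"
  shows "tnorm1 a b v \<le> sqrt (1 + (b - a)\<^sup>2 / 8) * norm1 a b v"
proof -
  have "(L2norm a b v)\<^sup>2 \<le> (b - a)\<^sup>2 / 8 * (norm1 a b v)\<^sup>2"
    unfolding L2norm_sq norm1_def
    by (rule poincare_inequality[OF H10_is_wderiv[OF assms(1)]]) (use assms in \<open>auto simp: H10_def\<close>)
  then have "tnorm1 a b v \<le> sqrt ((1 + (b - a)\<^sup>2 / 8) * (norm1 a b v)\<^sup>2)"
    unfolding tnorm1_def by (intro real_sqrt_le_mono) (simp add: algebra_simps)
  then show ?thesis using norm1_nonneg[of a b v] by (simp add: real_sqrt_mult)
qed

lemma mult_add_mult_le_sqrt_sum_squares: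
  fixes x1 x2 y1 y2 :: real
  shows "x1 * y1 + x2 * y2 \<le> sqrt (x1\<^sup>2 + x2\<^sup>2) * sqrt (y1\<^sup>2 + y2\<^sup>2)"
proof -
  have "(x1 * y1 + x2 * y2)\<^sup>2 \<le> (x1\<^sup>2 + x2\<^sup>2) * (y1\<^sup>2 + y2\<^sup>2)"
    using zero_le_power2[of "x1 * y2 - x2 * y1"] by (simp add: power2_eq_square algebra_simps)
  then have "sqrt ((x1 * y1 + x2 * y2)\<^sup>2) \<le> sqrt ((x1\<^sup>2 + x2\<^sup>2) * (y1\<^sup>2 + y2\<^sup>2))"
    by (rule real_sqrt_le_mono)
  then show ?thesis by (simp add: real_sqrt_mult)
qed

lemma lambda1_pos: "a < b \<Longrightarrow> 0 < lambda1 a b"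
  by (simp add: lambda1_def)

lemma omega_pos: "a < b \<Longrightarrow> 0 < omega a b"
  using lambda1_pos[of a b] by (simp add: omega_def)

text \<open>The crude Poincar\'e constant \<open>(b - a)\<^sup>2/8\<close> is within a factor 2 of the optimal one,
  \<open>(b - a)\<^sup>2/\<pi>\<^sup>2 = 1/\<lambda>\<^sub>1\<close>.\<close>
lemma sqrt_poincare_constant_le_omega:
  assumes "a < b"
  shows "sqrt (1 + (b - a)\<^sup>2 / 8) \<le> sqrt 2 * omega a b"
proof -
  define L where "L = b - a"
  have L: "0 < L" using assms by (simp add: L_def)
  have "pi\<^sup>2 \<le> 4\<^sup>2" using pi_less_4 pi_gt_zero by (intro power_mono) auto
  then have "L\<^sup>2 / 16 \<le> L\<^sup>2 / pi\<^sup>2" using L by (intro divide_left_mono) auto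
  moreover have "(1 + lambda1 a b) / lambda1 a b = 1 + L\<^sup>2 / pi\<^sup>2"
    using L lambda1_pos[OF assms] by (simp add: lambda1_def L_def power_divide field_simps)
  ultimately have "1 + L\<^sup>2 / 8 \<le> 2 * ((1 + lambda1 a b) / lambda1 a b)"
    by linarith
  then show ?thesis
    unfolding omega_def L_def real_sqrt_mult[symmetric] by (rule real_sqrt_le_mono)
qed

lemma abs_ip1_le:
  assumes u: "u \<in> H10 a b" and v: "v \<in> H10 a b" and ab: "a < b"
  shows "\<bar>ip1 a b u v\<bar> \<le> sqrt 2 * omega a b * tnorm1 a b u * norm1 a b v"
proof -
  have "\<bar>ip1 a b u v\<bar> \<le> L2norm a b u * L2norm a b v + norm1 a b u * norm1 a b v"
    unfolding ip1_def norm1_def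
    using abs_L2ip_le[OF H10_L2fun[OF u] H10_L2fun[OF v]]
      abs_L2ip_le[OF H10_wderiv_L2fun[OF u] H10_wderiv_L2fun[OF v]] by linarith
  also have "\<dots> \<le> tnorm1 a b u * tnorm1 a b v"
    unfolding tnorm1_def by (rule mult_add_mult_le_sqrt_sum_squares)
  also have "\<dots> \<le> tnorm1 a b u * (sqrt 2 * omega a b * norm1 a b v)"
    using tnorm1_le_norm1[OF v] sqrt_poincare_constant_le_omega[OF ab] norm1_nonneg[of a b v] ab
    by (intro mult_left_mono) (auto simp: tnorm1_def intro: order_trans mult_right_mono)
  finally show ?thesis by (simp add: algebra_simps)
qed

definition Mnorm1 :: "real \<Rightarrow> real \<Rightarrow> (real \<Rightarrow> real) \<Rightarrow> (real \<Rightarrow> real \<Rightarrow> real) \<Rightarrow> real" where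
  "Mnorm1 a b \<mu> \<eta> = (LINT s:{0<..}|lborel. \<mu> s * norm1 a b (\<eta> s))"

lemma kappa_pos: "kernel_ok \<mu> \<Longrightarrow> 0 < kappa \<mu>"
  by (simp add: kernel_ok_def kappa_def)

lemma
  assumes mu: "kernel_ok \<mu>" and eta: "\<eta> \<in> MM a b \<mu>"
  shows Mnorm1_integrable: "set_integrable lborel {0<..} (\<lambda>s. \<mu> s * norm1 a b (\<eta> s))"
    and Mnorm1_nonneg: "0 \<le> Mnorm1 a b \<mu> \<eta>"
    and Mnorm1_le_Mnorm: "Mnorm1 a b \<mu> \<eta> \<le> sqrt (kappa \<mu>) * Mnorm a b \<mu> \<eta>"
proof -
  have S: "{0::real<..} \<in> sets lborel" by simp
  have "set_integrable lborel {0<..} \<mu>" "\<And>s. s \<in> {0<..} \<Longrightarrow> 0 \<le> \<mu> s"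
    "\<And>s. s \<in> {0<..} \<Longrightarrow> 0 \<le> norm1 a b (\<eta> s)"
    "set_integrable lborel {0<..} (\<lambda>s. \<mu> s * (norm1 a b (\<eta> s))\<^sup>2)"
    using mu eta by (auto simp: kernel_ok_def MM_def norm1_nonneg)
  note hyps = S this
  show "set_integrable lborel {0<..} (\<lambda>s. \<mu> s * norm1 a b (\<eta> s))"
    by (rule set_integrable_weighted[OF hyps])
  show nonneg: "0 \<le> Mnorm1 a b \<mu> \<eta>"
    unfolding Mnorm1_def set_lebesgue_integral_def
    by (rule integral_nonneg_AE) (use hyps(3,4) in \<open>auto simp: indicator_def intro!: AE_I2\<close>)
  have "(Mnorm1 a b \<mu> \<eta>)\<^sup>2 \<le> kappa \<mu> * (LINT s:{0<..}|lborel. \<mu> s * (norm1 a b (\<eta> s))\<^sup>2)"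
    using set_integral_weighted_sq_le[OF hyps] by (simp add: Mnorm1_def kappa_def)
  then have "sqrt ((Mnorm1 a b \<mu> \<eta>)\<^sup>2) \<le> sqrt (kappa \<mu>) * Mnorm a b \<mu> \<eta>"
    unfolding Mnorm_def real_sqrt_mult[symmetric] by (rule real_sqrt_le_mono)
  then show "Mnorm1 a b \<mu> \<eta> \<le> sqrt (kappa \<mu>) * Mnorm a b \<mu> \<eta>"
    using nonneg by simp
qed

lemma abs_memory_integral_le:
  assumes mu: "kernel_ok \<mu>" and eta: "\<eta> \<in> MM a b \<mu>"
    and G: "\<And>s. 0 < s \<Longrightarrow> \<bar>G s\<bar> \<le> C * norm1 a b (\<eta> s)"
  shows "\<bar>LINT s:{0<..}|lborel. \<mu> s * G s\<bar> \<le> C * Mnorm1 a b \<mu> \<eta>"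
proof -
  have "\<bar>LINT s:{0<..}|lborel. \<mu> s * G s\<bar> \<le> (LINT s:{0<..}|lborel. C * (\<mu> s * norm1 a b (\<eta> s)))"
  proof (rule abs_set_integral_le)
    show "set_integrable lborel {0<..} (\<lambda>s. C * (\<mu> s * norm1 a b (\<eta> s)))"
      using Mnorm1_integrable[OF mu eta] by simp
    fix s :: real assume "s \<in> {0<..}"
    then have "0 \<le> \<mu> s" "\<bar>G s\<bar> \<le> C * norm1 a b (\<eta> s)" using mu G by (auto simp: kernel_ok_def)
    then show "\<bar>\<mu> s * G s\<bar> \<le> C * (\<mu> s * norm1 a b (\<eta> s))"
      by (simp add: abs_mult mult_left_mono mult.left_commute[of C])
  qed
  then show ?thesis by (simp add: Mnorm1_def)
qed

definition memory_coupling :: "real \<Rightarrow> real \<Rightarrow> (real \<Rightarrow> real) \<Rightarrow> state \<Rightarrow> real" where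
  "memory_coupling a b \<mu> z =
     (LINT s:{0<..}|lborel. \<mu> s * ip1 a b (fst z) (snd z s)) / sqrt (kappa \<mu>)"

lemma Lambda_eq_Lambda0_minus_coupling:
  "Lambda a b \<mu> f e z = Lambda a b \<mu> f 0 z - e * memory_coupling a b \<mu> z"
  unfolding Lambda_def memory_coupling_def Let_def by simp

lemma memory_coupling_le:
  assumes ab: "a < b" and mu: "kernel_ok \<mu>" and z: "(u, \<eta>) \<in> HH a b \<mu>"
  shows "memory_coupling a b \<mu> (u, \<eta>)
    \<le> sqrt 2 * omega a b * tnorm1 a b u * (Mnorm1 a b \<mu> \<eta> / sqrt (kappa \<mu>))"
proof -
  have u: "u \<in> H10 a b" and eta: "\<eta> \<in> MM a b \<mu>" using z by (auto simp: HH_def)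
  have "\<bar>LINT s:{0<..}|lborel. \<mu> s * ip1 a b u (\<eta> s)\<bar> \<le> sqrt 2 * omega a b * tnorm1 a b u * Mnorm1 a b \<mu> \<eta>"
    using abs_ip1_le[OF u _ ab] eta by (intro abs_memory_integral_le[OF mu eta]) (auto simp: MM_def)
  then show ?thesis
    using kappa_pos[OF mu] unfolding memory_coupling_def by (simp add: divide_right_mono)
qed

text \<open>Completing the square in \<open>\<parallel>F\<parallel>\<close> absorbs the forcing terms of \<open>\<Lambda>\<^sub>0\<close> at the cost of half of
  \<open>(\<integral>\<mu> \<parallel>\<eta>\<parallel>\<^sub>1)\<^sup>2 / \<kappa> \<le> \<parallel>\<eta>\<parallel>\<^sub>\<M>\<^sup>2\<close>.\<close>
lemma Lambda0_lower_bound: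
  assumes f: "L2fun a b f" and mu: "kernel_ok \<mu>" and z: "(u, \<eta>) \<in> HH a b \<mu>"
  shows "(tnorm1 a b u)\<^sup>2 + (Mnorm1 a b \<mu> \<eta> / sqrt (kappa \<mu>))\<^sup>2 / 2 \<le> Lambda a b \<mu> f 0 (u, \<eta>)"
proof -
  have eta: "\<eta> \<in> MM a b \<mu>" using z by (auto simp: HH_def)
  define k where "k = kappa \<mu>"
  define F where "F = primF a f"
  define \<phi> where "\<phi> = L2norm a b F"
  define N where "N = Mnorm a b \<mu> \<eta>"
  define t where "t = Mnorm1 a b \<mu> \<eta> / sqrt k"
  define x where "x = \<phi> / sqrt k"
  define P where "P = (LINT s:{0<..}|lborel. \<mu> s * L2ip a b F (wderiv a b (\<eta> s)))"
  have k: "0 < k" using kappa_pos[OF mu] by (simp add: k_def)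
  have "is_wderiv a b F f" using f by (simp add: is_wderiv_def F_def primF_def)
  then have FL: "L2fun a b F" by (rule continuous_on_imp_L2fun[OF is_wderiv_continuous_on])
  have "\<bar>P\<bar> \<le> \<phi> * Mnorm1 a b \<mu> \<eta>"
    unfolding P_def \<phi>_def using eta
    by (intro abs_memory_integral_le[OF mu eta])
      (auto simp: MM_def norm1_def intro!: abs_L2ip_le FL H10_wderiv_L2fun)
  moreover have "x * t = \<phi> * Mnorm1 a b \<mu> \<eta> / k"
    using k by (simp add: x_def t_def)
  ultimately have "2 / k * P \<ge> - 2 * x * t"
    using k by (simp add: abs_le_iff field_simps)
  moreover have "2 / k * \<phi>\<^sup>2 = 2 * x\<^sup>2" using k by (simp add: x_def power_divide)
  moreover have "0 \<le> 2 * x\<^sup>2 - 2 * x * t + t\<^sup>2 / 2"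
    using zero_le_power2[of "x - t / 2"] by (simp add: power2_eq_square algebra_simps)
  moreover have "t\<^sup>2 \<le> N\<^sup>2"
    using Mnorm1_le_Mnorm[OF mu eta] Mnorm1_nonneg[OF mu eta] k
    by (intro power_mono) (simp_all add: t_def N_def k_def field_simps)
  moreover have "Lambda a b \<mu> f 0 (u, \<eta>) = (tnorm1 a b u)\<^sup>2 + N\<^sup>2 + 2 / k * P + 2 / k * \<phi>\<^sup>2"
    by (simp add: Lambda_def Let_def Hnorm_def N_def k_def P_def F_def \<phi>_def)
  ultimately show ?thesis
    unfolding t_def[symmetric] k_def[symmetric] by linarith
qed

lemma memory_coupling_le_omega_Lambda0:
  assumes ab: "a < b" and f: "L2fun a b f" and mu: "kernel_ok \<mu>" and z: "z \<in> HH a b \<mu>"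
  shows "memory_coupling a b \<mu> z \<le> omega a b * Lambda a b \<mu> f 0 z"
proof -
  obtain u \<eta> where uz: "z = (u, \<eta>)" by (cases z)
  define U where "U = tnorm1 a b u"
  define t where "t = Mnorm1 a b \<mu> \<eta> / sqrt (kappa \<mu>)"
  have "sqrt 2 * U * t \<le> U\<^sup>2 + t\<^sup>2 / 2"
    using zero_le_power2[of "sqrt 2 * U - t"] by (simp add: power2_eq_square algebra_simps)
  have "memory_coupling a b \<mu> z \<le> omega a b * (sqrt 2 * U * t)"
    using memory_coupling_le[OF ab mu z[unfolded uz]] by (simp add: uz U_def t_def ac_simps)
  also have "\<dots> \<le> omega a b * (U\<^sup>2 + t\<^sup>2 / 2)"
    using omega_pos[OF ab] \<open>sqrt 2 * U * t \<le> U\<^sup>2 + t\<^sup>2 / 2\<close> by (intro mult_left_mono) auto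
  also have "\<dots> \<le> omega a b * Lambda a b \<mu> f 0 z"
    using Lambda0_lower_bound[OF f mu z[unfolded uz]] omega_pos[OF ab]
    by (simp add: uz U_def t_def)
  finally show ?thesis .
qed

section \<open>Sublevel sets of \<open>\<Lambda>\<^sub>\<epsilon>\<close>\<close>

lemma sublevel_mono_of_affine:
  fixes L0 J \<omega> c \<epsilon> \<alpha> :: real
  assumes J: "J \<le> \<omega> * L0" and \<omega>: "0 < \<omega>" and c: "0 \<le> c"
    and \<alpha>: "0 < \<alpha>" "\<alpha> \<le> \<epsilon> * (1 - \<omega> * \<epsilon>)" and sub: "L0 - \<epsilon> * J \<le> c / \<epsilon>"
  shows "L0 - \<alpha> * J \<le> c / \<alpha>"
proof -
  have "0 \<le> \<omega> * \<epsilon>\<^sup>2" using \<omega> by simp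
  then have \<alpha>\<epsilon>: "\<alpha> \<le> \<epsilon>" using \<alpha>(2) by (simp add: power2_eq_square algebra_simps)
  with \<alpha> have \<epsilon>: "0 < \<epsilon>" by simp
  show ?thesis
  proof (cases "J \<le> 0")
    case True
    then have "L0 - \<alpha> * J \<le> L0 - \<epsilon> * J" using \<alpha>\<epsilon> by (simp add: mult_right_mono_neg)
    also have "\<dots> \<le> c / \<epsilon>" by (rule sub)
    also have "\<dots> \<le> c / \<alpha>" using c \<alpha> \<alpha>\<epsilon> by (intro divide_left_mono) auto
    finally show ?thesis .
  next
    case False
    then have "0 < \<omega> * L0" using J by linarith
    with \<omega> have L0: "0 < L0" by (simp add: zero_less_mult_iff)
    have "0 \<le> \<alpha> * \<alpha> * J" using False \<alpha> by simp
    then have "\<alpha> * (L0 - \<alpha> * J) \<le> \<alpha> * L0" by (simp add: algebra_simps)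
    also have "\<dots> \<le> \<epsilon> * (1 - \<omega> * \<epsilon>) * L0" using \<alpha>(2) L0 by (intro mult_right_mono) auto
    also have "\<dots> \<le> \<epsilon> * (L0 - \<epsilon> * J)"
      using J \<epsilon> by (simp add: mult_left_mono algebra_simps)
    also have "\<dots> \<le> c" using sub \<epsilon> by (simp add: pos_le_divide_eq mult.commute)
    finally show ?thesis using \<alpha> by (simp add: pos_le_divide_eq mult.commute)
  qed
qed

lemma cstar_pos:
  assumes "0 < c1" "0 < c2" "0 < c3" "L2norm a b (primF a f) < c1 / (2 * sqrt (c2 * c3))"
  shows "0 < cstar a b f c1 c2 c3"
proof -
  have "c1 / (2 * sqrt (c2 * c3)) < c1 / sqrt (c2 * c3)"
    using assms(1-3) by (simp add: field_simps)
  then show ?thesis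
    using assms by (simp add: cstar_def)
qed

theorem lemma8p3:
  fixes a b :: real and f \<mu> :: "real \<Rightarrow> real"
    and c1 c2 c3 \<epsilon>0 \<epsilon> \<alpha> :: real
    and S :: "real \<Rightarrow> state \<Rightarrow> state"
  assumes ab: "a < b"
    and f: "L2fun a b f"
    and mu: "kernel_ok \<mu>"
    and c_pos: "c1 > 0" "c2 > 0" "c3 > 0"
    and eps0: "0 < \<epsilon>0" "\<epsilon>0 < 1 / (2 * omega a b)"
    and S_maps: "\<And>t z. t \<ge> 0 \<Longrightarrow> z \<in> HH a b \<mu> \<Longrightarrow> S t z \<in> HH a b \<mu>"
    and S_0: "\<And>z. z \<in> HH a b \<mu> \<Longrightarrow> S 0 z = z"
    and S_semi: "\<And>t s z. t \<ge> 0 \<Longrightarrow> s \<ge> 0 \<Longrightarrow> z \<in> HH a b \<mu> \<Longrightarrow> S (t + s) z = S t (S s z)"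
    and dissip: "\<And>z e t. z \<in> HH a b \<mu> \<Longrightarrow> 0 < e \<Longrightarrow> e \<le> \<epsilon>0 \<Longrightarrow> t \<ge> 0 \<Longrightarrow>
        \<exists>L'. ((\<lambda>\<tau>. Lambda a b \<mu> f e (S \<tau> z)) has_real_derivative L') (at t within {0..}) \<and>
             L' + e * c1 * Lambda a b \<mu> f e (S t z)
               \<le> c2 * (L2norm a b (primF a f))\<^sup>2 + c3 * e\<^sup>2 * (Lambda a b \<mu> f e (S t z))\<^sup>2"
    and F_small: "L2norm a b (primF a f) < c1 / (2 * sqrt (c2 * c3))"
    and eps: "0 < \<epsilon>" "\<epsilon> \<le> \<epsilon>0"
    and alpha: "0 < \<alpha>" "\<alpha> \<le> \<epsilon> * (1 - omega a b * \<epsilon>)"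
  shows "DD a b \<mu> f c1 c2 c3 \<epsilon> \<subseteq> DD a b \<mu> f c1 c2 c3 \<alpha>"
proof
  fix z assume "z \<in> DD a b \<mu> f c1 c2 c3 \<epsilon>"
  then have z: "z \<in> HH a b \<mu>" and sub: "Lambda a b \<mu> f \<epsilon> z \<le> cstar a b f c1 c2 c3 / \<epsilon>"
    by (auto simp: DD_def)
  have "Lambda a b \<mu> f \<alpha> z \<le> cstar a b f c1 c2 c3 / \<alpha>"
    using sublevel_mono_of_affine[OF memory_coupling_le_omega_Lambda0[OF ab f mu z] omega_pos[OF ab]
        less_imp_le[OF cstar_pos[OF c_pos F_small]] alpha]
      sub unfolding Lambda_eq_Lambda0_minus_coupling[of a b \<mu> f \<alpha> z]
        Lambda_eq_Lambda0_minus_coupling[of a b \<mu> f \<epsilon> z] .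
  with z show "z \<in> DD a b \<mu> f c1 c2 c3 \<alpha>" by (simp add: DD_def)
qed

end
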